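(* Let $G$ be a clique tree in which every block is a clique on at least $3$ vertices. Let $v$ be a cut vertex of $G$ and let $K_m$ ($m\ge 3$) be a pendant block of $G$ containing $v$. Let $G_1$ be the subgraph of $G$ induced by $V(G)\setminus (V(K_m)\setminus\{v\})$, so that $G=G_1\oplus_v K_m$. Then $$Z(G)=Z(G_1\oplus_v K_m)=Z(G_1)+Z(K_m)-1 = Z(G_1)+m-2.$$
   Context: All graphs are finite, simple and connected. A cut vertex of $G$ is a vertex $v$ with $G-v$ disconnected. A block is a maximal connected subgraph without a cut vertex of its own. A clique tree is a connected graph each of whose blocks is a complete graph (clique). A pendant block is a block containing exactly one cut vertex of $G$. If $G-v$ consists of two disjoint parts $W_1,W_2$ and $G_i$ is the subgraph induced by $\{v\}\cup V(W_i)$, then $G$ is the vertex-sum $G_1\oplus_v G_2$. Zero forcing: each vertex is coloured blue or white; the colour-change rule says that if a blue vertex $u$ has exactly one white neighbour $w$, then $w$ becomes blue. A set $S\subseteq V(G)$ is a zero forcing set if colouring $S$ blue and the rest white, repeated application of the rule turns all vertices blue. $Z(G)$, the zero forcing number, is the minimum size of a zero forcing set; in particular $Z(K_m)=m-1$. *)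

theory Defs
  imports Main
begin

definition graph :: "'a set \<Rightarrow> ('a \<Rightarrow> 'a \<Rightarrow> bool) \<Rightarrow> bool" where
  "graph V E \<longleftrightarrow> finite V \<and> (\<forall>u w. E u w \<longrightarrow> u \<in> V \<and> w \<in> V \<and> u \<noteq> w \<and> E w u)"

definition induced :: "('a \<Rightarrow> 'a \<Rightarrow> bool) \<Rightarrow> 'a set \<Rightarrow> 'a \<Rightarrow> 'a \<Rightarrow> bool" where
  "induced E S = (\<lambda>u w. E u w \<and> u \<in> S \<and> w \<in> S)"

definition connected_on :: "'a set \<Rightarrow> ('a \<Rightarrow> 'a \<Rightarrow> bool) \<Rightarrow> bool" where
  "connected_on S E \<longleftrightarrow> S \<noteq> {} \<and> (\<forall>u\<in>S. \<forall>w\<in>S. (induced E S)\<^sup>*\<^sup>* u w)"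

definition cut_vertex :: "'a set \<Rightarrow> ('a \<Rightarrow> 'a \<Rightarrow> bool) \<Rightarrow> 'a \<Rightarrow> bool" where
  "cut_vertex S E v \<longleftrightarrow> v \<in> S \<and>
     (\<exists>u\<in>S - {v}. \<exists>w\<in>S - {v}. \<not> (induced E (S - {v}))\<^sup>*\<^sup>* u w)"

definition nonsep :: "'a set \<Rightarrow> ('a \<Rightarrow> 'a \<Rightarrow> bool) \<Rightarrow> 'a set \<Rightarrow> bool" where
  "nonsep V E B \<longleftrightarrow> B \<subseteq> V \<and> connected_on B E \<and> (\<forall>x. \<not> cut_vertex B E x)"

definition block :: "'a set \<Rightarrow> ('a \<Rightarrow> 'a \<Rightarrow> bool) \<Rightarrow> 'a set \<Rightarrow> bool" where
  "block V E B \<longleftrightarrow> nonsep V E B \<and> (\<forall>C. nonsep V E C \<and> B \<subseteq> C \<longrightarrow> C = B)"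

definition is_clique :: "('a \<Rightarrow> 'a \<Rightarrow> bool) \<Rightarrow> 'a set \<Rightarrow> bool" where
  "is_clique E B \<longleftrightarrow> (\<forall>u\<in>B. \<forall>w\<in>B. u \<noteq> w \<longrightarrow> E u w)"

definition clique_tree :: "'a set \<Rightarrow> ('a \<Rightarrow> 'a \<Rightarrow> bool) \<Rightarrow> bool" where
  "clique_tree V E \<longleftrightarrow> graph V E \<and> connected_on V E \<and> (\<forall>B. block V E B \<longrightarrow> is_clique E B)"

definition pendant_block :: "'a set \<Rightarrow> ('a \<Rightarrow> 'a \<Rightarrow> bool) \<Rightarrow> 'a set \<Rightarrow> bool" where
  "pendant_block V E B \<longleftrightarrow> block V E B \<and> card {x\<in>B. cut_vertex V E x} = 1"

definition force_step :: "'a set \<Rightarrow> ('a \<Rightarrow> 'a \<Rightarrow> bool) \<Rightarrow> 'a set \<Rightarrow> 'a set \<Rightarrow> bool" where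
  "force_step V E Bl Bl' \<longleftrightarrow>
     (\<exists>u\<in>Bl. \<exists>w. {x\<in>V. E u x} - Bl = {w} \<and> Bl' = insert w Bl)"

definition zero_forcing_set :: "'a set \<Rightarrow> ('a \<Rightarrow> 'a \<Rightarrow> bool) \<Rightarrow> 'a set \<Rightarrow> bool" where
  "zero_forcing_set V E S \<longleftrightarrow> S \<subseteq> V \<and> (force_step V E)\<^sup>*\<^sup>* S V"

definition zf_number :: "'a set \<Rightarrow> ('a \<Rightarrow> 'a \<Rightarrow> bool) \<Rightarrow> nat" where
  "zf_number V E = (LEAST k. \<exists>S. zero_forcing_set V E S \<and> card S = k)"

end

theory Submission
  imports Defs "HOL-Library.Transitive_Closure_Table"
begin

text \<open>A non-cut vertex of a clique block has all its neighbours in the block, so the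
  vertices of \<open>K - {v}\<close> are pairwise closed twins and every zero forcing set of \<open>G\<close> misses
  at most one of them. Restricting a forcing process of \<open>G\<close> to \<open>G\<^sub>1 = G - (K - {v})\<close>
  (with \<open>v\<close> added to the start set when all of \<open>K - {v}\<close> is blue) gives
  \<open>Z(G\<^sub>1) + |K| - 2 \<le> Z(G)\<close>. Conversely, a forcing set of \<open>G\<^sub>1\<close> together with all but one
  vertex \<open>w\<close> of \<open>K - {v}\<close> forces \<open>G\<close>: the forcing process of \<open>G\<^sub>1\<close> runs unchanged in \<open>G\<close>,
  and once \<open>v\<close> is blue a third vertex of \<open>K\<close> forces \<open>w\<close>.\<close>

lemma graph_edgeD: "graph V E \<Longrightarrow> E u w \<Longrightarrow> u \<in> V \<and> w \<in> V \<and> u \<noteq> w \<and> E w u"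
  unfolding graph_def by blast

lemma graph_symp: "graph V E \<Longrightarrow> symp E"
  by (meson graph_edgeD sympI)

lemma symp_induced: "symp E \<Longrightarrow> symp (induced E S)"
  by (auto simp: symp_def induced_def)

lemma induced_rtranclp_sym:
  "symp E \<Longrightarrow> (induced E S)\<^sup>*\<^sup>* a b \<Longrightarrow> (induced E S)\<^sup>*\<^sup>* b a"
  by (metis sympD symp_induced symp_rtranclp)

lemma rtrancl_path_induced:
  assumes "rtrancl_path (induced E T) a xs b" "set (a # xs) \<subseteq> S"
  shows "(induced E S)\<^sup>*\<^sup>* a b"
  using assms
proof (induction rule: rtrancl_path.induct)
  case (step x y ys z)
  then have "induced E S x y" by (auto simp: induced_def)
  with step show ?case by (auto intro: converse_rtranclp_into_rtranclp)
qed simp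

lemma rtrancl_path_end_in_set: "rtrancl_path R a xs b \<Longrightarrow> b \<in> set (a # xs)"
  by (induction rule: rtrancl_path.induct) auto

lemma rtrancl_path_split:
  assumes "rtrancl_path R y ys z" "y # ys = as @ c # bs"
  obtains as' where "rtrancl_path R y as' c" "set (y # as') = set (as @ [c])"
    and "rtrancl_path R c bs z"
proof (cases as)
  case Nil
  then show ?thesis using assms by (intro that[of "[]"]) (auto intro: rtrancl_path.base)
next
  case (Cons a as0)
  then have "rtrancl_path R y (as0 @ c # bs) z" using assms by simp
  then obtain "rtrancl_path R y (as0 @ [c]) c" "rtrancl_path R c bs z"
    by (rule rtrancl_path_appendE)
  then show ?thesis using Cons assms(2) that by auto
qed

lemma clique_joins_reachable:
  assumes "symp E" "K \<subseteq> S" "is_clique E K"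
    and "(induced E S)\<^sup>*\<^sup>* u q1" "(induced E S)\<^sup>*\<^sup>* w q2" "q1 \<in> K" "q2 \<in> K"
  shows "(induced E S)\<^sup>*\<^sup>* u w"
proof -
  have "(induced E S)\<^sup>*\<^sup>* q1 q2"
    using assms(2,3,6,7) by (cases "q1 = q2") (auto simp: induced_def is_clique_def)
  moreover have "(induced E S)\<^sup>*\<^sup>* q2 w" using induced_rtranclp_sym[OF assms(1,5)] .
  ultimately show ?thesis using assms(4) by (meson rtranclp_trans)
qed

text \<open>Removing no vertex (\<open>D = {}\<close>) gives connectedness, removing one
  (\<open>D = {r}\<close>) shows that \<open>r\<close> is not a cut vertex.\<close>
lemma nonsep_if_reaches_clique:
  assumes "symp E" "C \<subseteq> V" "K \<subseteq> C" "is_clique E K" "K \<noteq> {}"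
    and reach: "\<And>D r c. D \<subseteq> {r} \<Longrightarrow> c \<in> C - D \<Longrightarrow> \<exists>q\<in>K - D. (induced E (C - D))\<^sup>*\<^sup>* c q"
  shows "nonsep V E C"
proof -
  have "(induced E C)\<^sup>*\<^sup>* u w" if "u \<in> C" "w \<in> C" for u w
  proof -
    have "\<exists>q\<in>K. (induced E C)\<^sup>*\<^sup>* c q" if "c \<in> C" for c
      using reach[of "{}" c c] that by simp
    then show ?thesis using clique_joins_reachable[OF assms(1,3,4)] that by blast
  qed
  moreover have "(induced E (C - {r}))\<^sup>*\<^sup>* u w" if uw: "u \<in> C - {r}" "w \<in> C - {r}" for r u w
  proof -
    obtain q1 q2 where "q1 \<in> K - {r}" "q2 \<in> K - {r}"
      "(induced E (C - {r}))\<^sup>*\<^sup>* u q1" "(induced E (C - {r}))\<^sup>*\<^sup>* w q2"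
      using reach[of "{r}" r] uw by blast
    moreover have "is_clique E (K - {r})" using assms(4) by (auto simp: is_clique_def)
    ultimately show ?thesis
      using clique_joins_reachable[OF assms(1), of "K - {r}" "C - {r}"] assms(3) by blast
  qed
  moreover have "C \<noteq> {}" using assms(3,5) by blast
  ultimately have "connected_on C E" "\<And>r. \<not> cut_vertex C E r"
    unfolding connected_on_def cut_vertex_def by blast+
  then show ?thesis using assms(2) by (simp add: nonsep_def)
qed

text \<open>The clique \<open>K\<close> together with a path from a neighbour \<open>y\<close> of \<open>x \<in> K\<close>
  back to \<open>K\<close> that avoids \<open>x\<close> has no cut vertex: deleting a path vertex, the part of
  the path before it still returns to \<open>K\<close> through the edge \<open>y x\<close>.\<close>
lemma nonsep_clique_with_path:
  assumes g: "graph V E" and "K \<subseteq> V" "is_clique E K" "x \<in> K" "E x y" "z \<in> K"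
    and P: "rtrancl_path (induced E (V - {x})) y ys z" and dist: "distinct (y # ys)"
  shows "nonsep V E (K \<union> set (y # ys))" (is "nonsep V E ?C")
proof (rule nonsep_if_reaches_clique[OF graph_symp[OF g] _ _ assms(3)])
  have PV: "set (y # ys) \<subseteq> V - {x}"
    using rtrancl_path_Range[OF P] graph_edgeD[OF g assms(5)] by (auto simp: induced_def)
  show "?C \<subseteq> V" "K \<subseteq> ?C" "K \<noteq> {}" using assms(2,4) PV by auto
  fix D r c assume D: "D \<subseteq> {r}" and c: "c \<in> ?C - D"
  show "\<exists>q\<in>K - D. (induced E (?C - D))\<^sup>*\<^sup>* c q"
  proof (cases "c \<in> K")
    case True
    then show ?thesis using c by blast
  next
    case False
    then have "c \<in> set (y # ys)" using c by blast
    then obtain as bs where sp: "y # ys = as @ c # bs" by (meson split_list)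
    obtain as' where P1: "rtrancl_path (induced E (V - {x})) y as' c"
      and s1: "set (y # as') = set (as @ [c])"
      and P2: "rtrancl_path (induced E (V - {x})) c bs z"
      using rtrancl_path_split[OF P sp] .
    show ?thesis
    proof (cases "D \<inter> set (c # bs) = {}")
      case True
      then have "(induced E (?C - D))\<^sup>*\<^sup>* c z"
        using rtrancl_path_induced[OF P2, where S = "?C - D"] sp by auto
      moreover have "z \<notin> D" using rtrancl_path_end_in_set[OF P2] True by auto
      ultimately show ?thesis using assms(6) by auto
    next
      case False
      then have rD: "D = {r}" "r \<in> set bs" using c D by auto
      then have "r \<notin> set (as @ [c])" using dist sp by auto
      then have "(induced E (?C - D))\<^sup>*\<^sup>* y c"
        using rtrancl_path_induced[OF P1, where S = "?C - D"] s1 sp rD(1) by auto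
      then have cy: "(induced E (?C - D))\<^sup>*\<^sup>* c y"
        using induced_rtranclp_sym[OF graph_symp[OF g]] by blast
      have xD: "x \<notin> D" using rD PV sp by auto
      have "y \<in> set (as @ [c])" using s1 by (metis list.set_intros(1))
      then have "y \<notin> D" using rD(1) \<open>r \<notin> set (as @ [c])\<close> by auto
      then have "induced E (?C - D) y x"
        using xD graph_edgeD[OF g assms(5)] assms(4) by (simp add: induced_def)
      with cy have "(induced E (?C - D))\<^sup>*\<^sup>* c x"
        by (rule rtranclp.rtrancl_into_rtrancl)
      then show ?thesis using xD assms(4) by blast
    qed
  qed
qed

lemma nbr_in_clique_block_if_not_cut:
  assumes g: "graph V E" and bl: "block V E K" and cl: "is_clique E K"
    and cK: "card K \<ge> 2" and xK: "x \<in> K" and ncut: "\<not> cut_vertex V E x" and exy: "E x y"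
  shows "y \<in> K"
proof -
  have KV: "K \<subseteq> V" using bl by (auto simp: block_def nonsep_def)
  have "\<not> K \<subseteq> {x}" using cK card_mono[of "{x}" K] by auto
  then obtain z where zK: "z \<in> K" "z \<noteq> x" by auto
  have yV: "y \<in> V" "y \<noteq> x" using graph_edgeD[OF g exy] by auto
  have "(induced E (V - {x}))\<^sup>*\<^sup>* y z"
    using ncut xK KV yV zK by (auto simp: cut_vertex_def)
  then obtain ys where P: "rtrancl_path (induced E (V - {x})) y ys z" and "distinct (y # ys)"
    by (metis rtranclp_eq_rtrancl_path rtrancl_path_distinct)
  then have "nonsep V E (K \<union> set (y # ys))"
    using nonsep_clique_with_path[OF g KV cl xK exy zK(1)] by blast
  then have "K \<union> set (y # ys) = K" using bl by (auto simp: block_def)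
  then show ?thesis by auto
qed

lemma zf_number_le: "zero_forcing_set V E S \<Longrightarrow> zf_number V E \<le> card S"
  unfolding zf_number_def by (rule Least_le) blast

lemma zf_number_attained: "\<exists>S. zero_forcing_set V E S \<and> card S = zf_number V E"
proof -
  have "zero_forcing_set V E V" by (simp add: zero_forcing_set_def)
  then have "\<exists>k S. zero_forcing_set V E S \<and> card S = k" by blast
  then show ?thesis unfolding zf_number_def by (rule LeastI_ex)
qed

lemma force_stepI: "u \<in> Bl \<Longrightarrow> {x\<in>V. E u x} - Bl = {w} \<Longrightarrow> force_step V E Bl (insert w Bl)"
  unfolding force_step_def by blast

lemma force_stepE:
  assumes "force_step V E Bl Bl'"
  obtains u w where "u \<in> Bl" "{x\<in>V. E u x} - Bl = {w}" "Bl' = insert w Bl"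
  using assms unfolding force_step_def by blast

lemma force_step_subset: "force_step V E B B' \<Longrightarrow> B \<subseteq> V \<Longrightarrow> B' \<subseteq> V"
  by (auto elim: force_stepE)

lemma white_nbrD:
  assumes "{x\<in>V. E u x} - B = {w}"
  shows "w \<in> V" "E u w" "w \<notin> B" and "y \<in> V \<Longrightarrow> E u y \<Longrightarrow> y \<notin> B \<Longrightarrow> y = w"
  using assms by blast+

text \<open>Closed twins: apart from each other, \<open>a\<close> and \<open>b\<close> have the same neighbours.\<close>
lemma force_step_keeps_twins_white:
  assumes "a \<in> V" "b \<in> V" "a \<noteq> b" "a \<notin> Bl" "b \<notin> Bl"
    and "\<forall>u. E u a \<longrightarrow> u \<noteq> b \<longrightarrow> E u b" "\<forall>u. E u b \<longrightarrow> u \<noteq> a \<longrightarrow> E u a"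
    and "force_step V E Bl Bl'"
  shows "a \<notin> Bl' \<and> b \<notin> Bl'"
proof -
  obtain u w where u: "u \<in> Bl" "{x\<in>V. E u x} - Bl = {w}" "Bl' = insert w Bl"
    using assms(8) by (rule force_stepE)
  note uw = white_nbrD(2)[where E = E and u = u, OF u(2)]
    and only = white_nbrD(4)[where E = E and u = u, OF u(2)]
  have "w \<noteq> a"
  proof
    assume "w = a"
    have "u \<noteq> b" using u(1) assms(5) by blast
    then have "E u b" using uw \<open>w = a\<close> assms(6) by simp
    then show False using only[OF assms(2)] assms(3,5) \<open>w = a\<close> by simp
  qed
  moreover have "w \<noteq> b"
  proof
    assume "w = b"
    have "u \<noteq> a" using u(1) assms(4) by blast
    then have "E u a" using uw \<open>w = b\<close> assms(7) by simp
    then show False using only[OF assms(1)] assms(3,4) \<open>w = b\<close> by simp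
  qed
  ultimately show ?thesis using u(3) assms(4,5) by simp
qed

lemma zero_forcing_set_meets_twins:
  assumes "zero_forcing_set V E S" "a \<in> V" "b \<in> V" "a \<noteq> b"
    and "\<forall>u. E u a \<longrightarrow> u \<noteq> b \<longrightarrow> E u b" "\<forall>u. E u b \<longrightarrow> u \<noteq> a \<longrightarrow> E u a"
  shows "a \<in> S \<or> b \<in> S"
proof (rule ccontr)
  assume white: "\<not> (a \<in> S \<or> b \<in> S)"
  have "a \<notin> T \<and> b \<notin> T" if "(force_step V E)\<^sup>*\<^sup>* S T" for T
    using that
  proof (induction rule: rtranclp_induct)
    case base then show ?case using white by blast
  next
    case (step Bl Bl')
    then show ?case using force_step_keeps_twins_white[OF assms(2-4) _ _ assms(5,6)] by blast
  qed
  moreover have "(force_step V E)\<^sup>*\<^sup>* S V" using assms(1) by (simp add: zero_forcing_set_def)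
  ultimately show False using assms(2) by blast
qed

text \<open>A force in \<open>G\<close> is still a force in \<open>G[V\<^sub>1]\<close> when forcer and target lie in \<open>V\<^sub>1\<close>,
  since the target stays the only white neighbour there; the extra blue set \<open>X\<close>
  absorbs forces whose forcer lies outside \<open>V\<^sub>1\<close>.\<close>
lemma force_step_restrict:
  assumes "V1 \<subseteq> V" "X \<subseteq> V1" "u \<in> Bl" "{x\<in>V. E u x} - Bl = {w}"
    and "w \<in> V1 - X \<Longrightarrow> u \<in> V1"
  shows "(force_step V1 (induced E V1))\<^sup>*\<^sup>* (Bl \<inter> V1 \<union> X) (insert w Bl \<inter> V1 \<union> X)"
proof (cases "w \<in> V1 - X")
  case False
  then have "insert w Bl \<inter> V1 \<union> X = Bl \<inter> V1 \<union> X" by auto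
  then show ?thesis by simp
next
  case True
  then have uV: "u \<in> V1" using assms by auto
  have "{x\<in>V1. induced E V1 u x} - (Bl \<inter> V1 \<union> X) = ({x\<in>V. E u x} - Bl) \<inter> V1 - X"
    using uV assms(1) by (auto simp: induced_def)
  also have "\<dots> = {w}" using True assms(4) by auto
  finally have "force_step V1 (induced E V1) (Bl \<inter> V1 \<union> X) (insert w (Bl \<inter> V1 \<union> X))"
    using uV assms(3) by (intro force_stepI) auto
  moreover have "insert w (Bl \<inter> V1 \<union> X) = insert w Bl \<inter> V1 \<union> X" using True by auto
  ultimately show ?thesis by simp
qed

lemma forcing_chain_restrict:
  assumes "V1 \<subseteq> V" "X \<subseteq> V1" "(force_step V E)\<^sup>*\<^sup>* S T"
    and forcer_in: "\<And>Bl u w. (force_step V E)\<^sup>*\<^sup>* S Bl \<Longrightarrow> u \<in> Bl \<Longrightarrow> {x\<in>V. E u x} - Bl = {w}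
      \<Longrightarrow> w \<in> V1 - X \<Longrightarrow> u \<in> V1"
  shows "(force_step V1 (induced E V1))\<^sup>*\<^sup>* (S \<inter> V1 \<union> X) (T \<inter> V1 \<union> X)"
  using assms(3)
proof (induction rule: rtranclp_induct)
  case (step Bl Bl')
  obtain u w where u: "u \<in> Bl" "{x\<in>V. E u x} - Bl = {w}" "Bl' = insert w Bl"
    using step.hyps(2) by (rule force_stepE)
  have "(force_step V1 (induced E V1))\<^sup>*\<^sup>* (Bl \<inter> V1 \<union> X) (Bl' \<inter> V1 \<union> X)"
    unfolding u(3) using assms(1,2) u(1,2) forcer_in[OF step.hyps(1) u(1,2)]
    by (rule force_step_restrict[of V1 V X u Bl E w])
  with step.IH show ?case by (rule rtranclp_trans)
qed simp

lemma zf_number_clique: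
  assumes "finite K" "is_clique E K" "card K \<ge> 2"
  shows "zf_number K (induced E K) = card K - 1"
proof (rule antisym)
  have "\<not> card K \<le> Suc 0" using assms(3) by simp
  then obtain w x where wx: "w \<in> K" "x \<in> K" "x \<noteq> w"
    using card_le_Suc0_iff_eq[OF assms(1)] by blast
  have "{y\<in>K. induced E K x y} - (K - {w}) = {w}"
    using wx assms(2) by (auto simp: induced_def is_clique_def)
  then have "force_step K (induced E K) (K - {w}) (insert w (K - {w}))"
    using wx by (intro force_stepI) auto
  then have "zero_forcing_set K (induced E K) (K - {w})"
    using wx(1) by (simp add: zero_forcing_set_def insert_absorb)
  then show "zf_number K (induced E K) \<le> card K - 1"
    using zf_number_le wx(1) assms(1) by fastforce
next
  obtain S where S: "zero_forcing_set K (induced E K) S" "card S = zf_number K (induced E K)"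
    using zf_number_attained by blast
  have SK: "S \<subseteq> K" using S by (simp add: zero_forcing_set_def)
  have "a = b" if ab: "a \<in> K - S" "b \<in> K - S" for a b
  proof (rule ccontr)
    assume "a \<noteq> b"
    with ab have "a \<in> S \<or> b \<in> S"
      using assms(2) by (intro zero_forcing_set_meets_twins[OF S(1)])
        (auto simp: induced_def is_clique_def)
    with ab show False by blast
  qed
  then have "card (K - S) \<le> 1" by (simp add: card_le_Suc0_iff_eq assms(1))
  then show "card K - 1 \<le> zf_number K (induced E K)"
    using S(2) SK assms(1) by (simp add: card_Diff_subset finite_subset)
qed

locale pendant_clique =
  fixes V :: "'a set" and E :: "'a \<Rightarrow> 'a \<Rightarrow> bool" and K :: "'a set" and v :: 'a
  assumes graph: "graph V E"
    and K_subset: "K \<subseteq> V" and clique: "is_clique E K" and v_in_K: "v \<in> K"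
    and card_K: "card K \<ge> 3"
    and nbrs_in_K: "\<And>x y. x \<in> K - {v} \<Longrightarrow> E x y \<Longrightarrow> y \<in> K"
begin

abbreviation V1 :: "'a set" where "V1 \<equiv> V - (K - {v})"

abbreviation E1 :: "'a \<Rightarrow> 'a \<Rightarrow> bool" where "E1 \<equiv> induced E V1"

lemma finite_V: "finite V"
  using graph by (simp add: graph_def)

lemma finite_K: "finite K"
  using finite_V K_subset by (rule finite_subset[rotated])

lemma v_in_V1: "v \<in> V1"
  using v_in_K K_subset by blast

lemma nbrs_eq:
  assumes "x \<in> K - {v}"
  shows "{y\<in>V. E x y} = K - {x}"
proof (intro set_eqI iffI)
  fix y assume "y \<in> {y\<in>V. E x y}"
  then have "E x y" by simp
  then show "y \<in> K - {x}" using nbrs_in_K[OF assms] graph_edgeD[OF graph] by blast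
next
  fix y assume "y \<in> K - {x}"
  then show "y \<in> {y\<in>V. E x y}" using clique assms K_subset by (auto simp: is_clique_def)
qed

lemma card_split:
  assumes "S \<subseteq> V"
  shows "card S = card (S \<inter> V1) + card (S \<inter> (K - {v}))"
proof -
  have "finite S" using assms finite_V by (rule finite_subset)
  moreover have "S = S \<inter> V1 \<union> S \<inter> (K - {v})" using assms by blast
  ultimately show ?thesis
    by (metis Diff_disjoint Int_Diff card_Un_disjoint finite_Int inf_commute)
qed

lemma card_K_minus_two: "w \<in> K - {v} \<Longrightarrow> card (K - {v, w}) = card K - 2"
  using finite_K v_in_K by (auto simp: card_Diff_subset)

lemma third_vertex:
  assumes "w \<in> K - {v}"
  obtains x where "x \<in> K - {v, w}"
proof -
  have "card (K - {v, w}) \<noteq> 0" using card_K_minus_two[OF assms] card_K by simp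
  then have "K - {v, w} \<noteq> {}" by (metis card.empty)
  then show ?thesis using that by blast
qed

lemma twins:
  assumes "a \<in> K - {v}" "b \<in> K - {v}"
  shows "\<forall>u. E u a \<longrightarrow> u \<noteq> b \<longrightarrow> E u b"
proof (intro allI impI)
  fix u assume "E u a" "u \<noteq> b"
  then have "u \<in> K" using nbrs_in_K[OF assms(1)] graph_edgeD[OF graph] by blast
  then show "E u b" using clique assms(2) \<open>u \<noteq> b\<close> by (simp add: is_clique_def)
qed

lemma zf_set_misses_at_most_one:
  assumes "zero_forcing_set V E S" "a \<in> K - {v} - S" "b \<in> K - {v} - S"
  shows "a = b"
proof (rule ccontr)
  assume "a \<noteq> b"
  moreover have a: "a \<in> K - {v}" "a \<in> V" and b: "b \<in> K - {v}" "b \<in> V"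
    using assms(2,3) K_subset by auto
  ultimately have "a \<in> S \<or> b \<in> S"
    using zero_forcing_set_meets_twins[OF assms(1) a(2) b(2) _ twins[OF a(1) b(1)] twins[OF b(1) a(1)]]
    by blast
  with assms(2,3) show False by blast
qed

lemma force_last_of_K:
  assumes "w \<in> K - {v}" "K - {v, w} \<subseteq> B" "v \<in> B"
  shows "(force_step V E)\<^sup>*\<^sup>* B (insert w B)"
proof -
  obtain x where x: "x \<in> K - {v, w}" using third_vertex[OF assms(1)] .
  then have N: "{y\<in>V. E x y} = K - {x}" using nbrs_eq by blast
  show ?thesis
  proof (cases "w \<in> B")
    case True
    then show ?thesis by (simp add: insert_absorb)
  next
    case False
    have "x \<in> B" using x assms(2) by blast
    moreover have "{y\<in>V. E x y} - B = {w}" unfolding N using x assms False by blast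
    ultimately show ?thesis by (intro r_into_rtranclp force_stepI)
  qed
qed

lemma zf_lower_saturated:
  assumes S: "zero_forcing_set V E S" and sat: "K - {v} \<subseteq> S"
  shows "zf_number V1 E1 + card K - 2 \<le> card S"
proof -
  have SV: "S \<subseteq> V" and chain: "(force_step V E)\<^sup>*\<^sup>* S V"
    using S by (auto simp: zero_forcing_set_def)
  have "(force_step V1 E1)\<^sup>*\<^sup>* (S \<inter> V1 \<union> {v}) (V \<inter> V1 \<union> {v})"
  proof (rule forcing_chain_restrict[OF _ _ chain])
    fix Bl u w assume "u \<in> Bl" "{x\<in>V. E u x} - Bl = {w}" "w \<in> V1 - {v}"
    then have "E u w" "w \<notin> K" by blast+
    then show "u \<in> V1" using nbrs_in_K graph_edgeD[OF graph \<open>E u w\<close>] by blast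
  qed (use v_in_V1 in auto)
  moreover have "V \<inter> V1 \<union> {v} = V1" using v_in_V1 by blast
  ultimately have "zero_forcing_set V1 E1 (S \<inter> V1 \<union> {v})"
    using v_in_V1 by (simp add: zero_forcing_set_def)
  moreover have "card (S \<inter> V1 \<union> {v}) \<le> card (S \<inter> V1) + 1"
    using finite_V SV by (simp add: card_insert_if finite_subset)
  ultimately have "zf_number V1 E1 \<le> card (S \<inter> V1) + 1"
    using zf_number_le le_trans by blast
  moreover have "card S = card (S \<inter> V1) + card (K - {v})"
    using card_split[OF SV] sat by (simp add: Int_absorb1)
  ultimately show ?thesis using card_K finite_K v_in_K by simp
qed

text \<open>If \<open>w\<close> is the only vertex of \<open>K - {v}\<close> missing from \<open>S\<close>, then \<open>w\<close> can only be
  forced from inside \<open>K\<close>, which requires \<open>v\<close> to be blue already.\<close>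
lemma forcing_invariant:
  assumes "(force_step V E)\<^sup>*\<^sup>* S B" "w \<in> K - {v}" "w \<notin> S" "K - {v, w} \<subseteq> S"
  shows "K - {v, w} \<subseteq> B \<and> (w \<in> B \<longrightarrow> v \<in> B)"
  using assms(1)
proof (induction rule: rtranclp_induct)
  case base
  then show ?case using assms(3,4) by blast
next
  case (step B B')
  obtain u x where u: "u \<in> B" "{y\<in>V. E u y} - B = {x}" "B' = insert x B"
    using step.hyps(2) by (rule force_stepE)
  have "v \<in> B'" if "w \<in> B'" "w \<notin> B"
  proof -
    have "x = w" using that u(3) by blast
    then have "E u w" using u(2) by blast
    then have "u \<in> K" using nbrs_in_K[OF assms(2)] graph_edgeD[OF graph \<open>E u w\<close>] by blast
    show ?thesis
    proof (cases "u = v")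
      case False
      then have "v \<in> {y\<in>V. E u y}"
        using clique \<open>u \<in> K\<close> v_in_K K_subset by (auto simp: is_clique_def)
      moreover have "v \<noteq> x" using \<open>x = w\<close> assms(2) by blast
      ultimately show ?thesis using u(2,3) by blast
    qed (use u in blast)
  qed
  then show ?case using step.IH u(3) by blast
qed

lemma zf_lower_unsaturated:
  assumes S: "zero_forcing_set V E S" and w: "w \<in> K - {v}" "w \<notin> S"
  shows "zf_number V1 E1 + card K - 2 \<le> card S"
proof -
  have SV: "S \<subseteq> V" and chain: "(force_step V E)\<^sup>*\<^sup>* S V"
    using S by (auto simp: zero_forcing_set_def)
  have KS: "K - {v, w} \<subseteq> S" using zf_set_misses_at_most_one[OF S] w by blast
  have "(force_step V1 E1)\<^sup>*\<^sup>* (S \<inter> V1 \<union> {}) (V \<inter> V1 \<union> {})"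
  proof (rule forcing_chain_restrict[OF _ _ chain])
    fix Bl u x assume reach: "(force_step V E)\<^sup>*\<^sup>* S Bl"
      and u: "u \<in> Bl" "{y\<in>V. E u y} - Bl = {x}" and x: "x \<in> V1 - {}"
    show "u \<in> V1"
    proof (rule ccontr)
      assume "u \<notin> V1"
      have ux: "E u x" "x \<notin> Bl" using white_nbrD(2,3)[where E = E and u = u, OF u(2)] by simp_all
      then have uK: "u \<in> K - {v}" using graph_edgeD[OF graph ux(1)] \<open>u \<notin> V1\<close> by blast
      then have "x = v" using nbrs_in_K ux(1) x by blast
      have "w \<in> Bl"
      proof (rule ccontr)
        assume "w \<notin> Bl"
        then have "u \<noteq> w" using u(1) by blast
        then have "E u w" using clique uK w(1) by (simp add: is_clique_def)
        then have "w = x" using white_nbrD(4)[where E = E and u = u, OF u(2)] K_subset w(1) \<open>w \<notin> Bl\<close> by blast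
        then show False using \<open>x = v\<close> w(1) by blast
      qed
      then have "v \<in> Bl" using forcing_invariant[OF reach w KS] by blast
      then show False using ux(2) \<open>x = v\<close> by blast
    qed
  qed simp_all
  moreover have "V \<inter> V1 \<union> {} = V1" "S \<inter> V1 \<union> {} = S \<inter> V1" by blast+
  ultimately have "zero_forcing_set V1 E1 (S \<inter> V1)"
    unfolding zero_forcing_set_def by simp
  then have "zf_number V1 E1 \<le> card (S \<inter> V1)" by (rule zf_number_le)
  moreover have "S \<inter> (K - {v}) = K - {v, w}" using KS w by blast
  then have "card S = card (S \<inter> V1) + card (K - {v, w})"
    using card_split[OF SV] by simp
  ultimately show ?thesis using card_K_minus_two[OF w(1)] card_K by simp
qed

lemma zf_lower: "zf_number V1 E1 + card K - 2 \<le> zf_number V E"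
proof -
  obtain S where S: "zero_forcing_set V E S" "card S = zf_number V E"
    using zf_number_attained by blast
  show ?thesis
  proof (cases "K - {v} \<subseteq> S")
    case True
    then show ?thesis using zf_lower_saturated[OF S(1)] S(2) by simp
  next
    case False
    then show ?thesis using zf_lower_unsaturated[OF S(1)] S(2) by auto
  qed
qed

text \<open>A blue set \<open>B\<close> of \<open>G\<^sub>1\<close> lifted to \<open>G\<close>: the vertices \<open>K - {v, w}\<close> are blue from the
  start, and \<open>w\<close> turns blue as soon as \<open>v\<close> does.\<close>
definition lift_blue :: "'a \<Rightarrow> 'a set \<Rightarrow> 'a set" where
  "lift_blue w B = B \<union> (K - {v, w}) \<union> (if v \<in> B then {w} else {})"

lemma lift_blue_inter_V1: "w \<in> K - {v} \<Longrightarrow> B \<subseteq> V1 \<Longrightarrow> lift_blue w B \<inter> V1 = B"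
  by (auto simp: lift_blue_def)

lemma lift_force_step:
  assumes w: "w \<in> K - {v}" and step: "force_step V1 E1 B B'" and B: "B \<subseteq> V1"
  shows "(force_step V E)\<^sup>*\<^sup>* (lift_blue w B) (lift_blue w B')"
proof -
  obtain u z where u: "u \<in> B" "{x\<in>V1. E1 u x} - B = {z}" "B' = insert z B"
    using step by (rule force_stepE)
  have uV1: "u \<in> V1" using u(1) B by blast
  have outside_blue: "x \<in> lift_blue w B" if "x \<in> V" "E u x" "x \<notin> V1" for x
  proof -
    have xK: "x \<in> K - {v}" using that by blast
    show ?thesis
    proof (cases "u = v")
      case True
      then show ?thesis using u(1) xK by (auto simp: lift_blue_def)
    next
      case False
      have "E x u" using graph_edgeD[OF graph \<open>E u x\<close>] by blast
      then have "u \<in> K" using nbrs_in_K[OF xK] by blast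
      then show ?thesis using False uV1 by blast
    qed
  qed
  have "{x\<in>V. E u x} - lift_blue w B = {x\<in>V1. E1 u x} - B"
  proof (intro set_eqI iffI)
    fix x assume x: "x \<in> {x\<in>V. E u x} - lift_blue w B"
    then have "x \<in> V1" using outside_blue by blast
    then show "x \<in> {x\<in>V1. E1 u x} - B" using x uV1 by (auto simp: induced_def lift_blue_def)
  next
    fix x assume "x \<in> {x\<in>V1. E1 u x} - B"
    then show "x \<in> {x\<in>V. E u x} - lift_blue w B"
      using lift_blue_inter_V1[OF w B] by (auto simp: induced_def)
  qed
  then have "force_step V E (lift_blue w B) (insert z (lift_blue w B))"
    using u(1,2) by (intro force_stepI) (auto simp: lift_blue_def)
  moreover have "(force_step V E)\<^sup>*\<^sup>* (insert z (lift_blue w B)) (lift_blue w B')"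
  proof (cases "z = v")
    case True
    then have "(force_step V E)\<^sup>*\<^sup>* (insert z (lift_blue w B)) (insert w (insert z (lift_blue w B)))"
      using w by (intro force_last_of_K) (auto simp: lift_blue_def)
    moreover have "insert w (insert z (lift_blue w B)) = lift_blue w B'"
      using True u(3) by (auto simp: lift_blue_def)
    ultimately show ?thesis by simp
  next
    case False
    then have "insert z (lift_blue w B) = lift_blue w B'" using u(3) by (auto simp: lift_blue_def)
    then show ?thesis by simp
  qed
  ultimately show ?thesis by (rule converse_rtranclp_into_rtranclp)
qed

lemma lift_forcing_chain:
  assumes w: "w \<in> K - {v}" and chain: "(force_step V1 E1)\<^sup>*\<^sup>* S T" and S: "S \<subseteq> V1"
  shows "(force_step V E)\<^sup>*\<^sup>* (lift_blue w S) (lift_blue w T)"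
proof -
  have "T \<subseteq> V1 \<and> (force_step V E)\<^sup>*\<^sup>* (lift_blue w S) (lift_blue w T)"
    using chain
  proof (induction rule: rtranclp_induct)
    case (step B B')
    then show ?case
      using force_step_subset lift_force_step[OF w] rtranclp_trans by metis
  qed (use S in simp)
  then show ?thesis by blast
qed

lemma zf_upper: "zf_number V E \<le> zf_number V1 E1 + card K - 2"
proof -
  have "\<not> K \<subseteq> {v}" using card_K card_mono[of "{v}" K] by auto
  then obtain w where w: "w \<in> K - {v}" by blast
  obtain S1 where S1: "zero_forcing_set V1 E1 S1" "card S1 = zf_number V1 E1"
    using zf_number_attained by blast
  have S1V1: "S1 \<subseteq> V1" and chain: "(force_step V1 E1)\<^sup>*\<^sup>* S1 V1"
    using S1 by (auto simp: zero_forcing_set_def)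
  define S where "S = S1 \<union> (K - {v, w})"
  have "(force_step V E)\<^sup>*\<^sup>* S (lift_blue w S1)"
  proof (cases "v \<in> S1")
    case True
    then have "lift_blue w S1 = insert w S" by (auto simp: lift_blue_def S_def)
    then show ?thesis using True w by (auto simp: S_def intro: force_last_of_K)
  qed (simp add: lift_blue_def S_def)
  also have "(force_step V E)\<^sup>*\<^sup>* (lift_blue w S1) (lift_blue w V1)"
    using lift_forcing_chain[OF w chain S1V1] .
  also have "lift_blue w V1 = V" using v_in_V1 w K_subset by (auto simp: lift_blue_def)
  moreover have SV: "S \<subseteq> V" using S1V1 K_subset by (auto simp: S_def)
  ultimately have "zero_forcing_set V E S" by (simp add: zero_forcing_set_def)
  then have "zf_number V E \<le> card S" by (rule zf_number_le)
  also have "card S = card S1 + card (K - {v, w})"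
  proof -
    have "S \<inter> V1 = S1" "S \<inter> (K - {v}) = K - {v, w}" using S1V1 w by (auto simp: S_def)
    then show ?thesis using card_split[OF SV] by simp
  qed
  finally show ?thesis using S1(2) card_K_minus_two[OF w] card_K by simp
qed

theorem zf_number_eq: "zf_number V E = zf_number V1 E1 + card K - 2"
  using zf_lower zf_upper by (rule antisym[rotated])

end

lemma pendant_clique_if_pendant_block:
  assumes ct: "clique_tree V E" and pb: "pendant_block V E K"
    and v: "v \<in> K" "cut_vertex V E v" and card: "card K \<ge> 3"
  shows "pendant_clique V E K v"
proof
  show g: "graph V E" using ct by (simp add: clique_tree_def)
  have bl: "block V E K" using pb by (simp add: pendant_block_def)
  then show cl: "is_clique E K" using ct by (simp add: clique_tree_def)
  show "K \<subseteq> V" using bl by (simp add: block_def nonsep_def)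
  show "v \<in> K" "card K \<ge> 3" by (fact v(1), fact card)
  have "card {x\<in>K. cut_vertex V E x} = 1" using pb by (simp add: pendant_block_def)
  then obtain c where "{x\<in>K. cut_vertex V E x} = {c}" by (rule card_1_singletonE)
  moreover have "v \<in> {x\<in>K. cut_vertex V E x}" using v by simp
  ultimately have cuts: "{x\<in>K. cut_vertex V E x} = {v}" by simp
  fix x y assume x: "x \<in> K - {v}" and "E x y"
  then have "\<not> cut_vertex V E x" using cuts by blast
  moreover have "card K \<ge> 2" using card by simp
  ultimately show "y \<in> K"
    using nbr_in_clique_block_if_not_cut[OF g bl cl _ _ _ \<open>E x y\<close>] x by blast
qed

theorem corollary2p5:
  fixes V :: "'a set" and E :: "'a \<Rightarrow> 'a \<Rightarrow> bool" and v :: 'a and K :: "'a set" and m :: nat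
  assumes "clique_tree V E"
    and "\<forall>B. block V E B \<longrightarrow> card B \<ge> 3"
    and "cut_vertex V E v"
    and "pendant_block V E K" and "v \<in> K"
    and "m = card K" and "m \<ge> 3"
  shows "zf_number (V - (K - {v})) (induced E (V - (K - {v})))
           + zf_number K (induced E K) - 1 = zf_number V E
       \<and> zf_number V E = zf_number (V - (K - {v})) (induced E (V - (K - {v}))) + m - 2"
proof -
  \<comment> \<open>Only the pendant block needs three vertices.\<close>
  interpret pendant_clique V E K v
    using pendant_clique_if_pendant_block[OF assms(1,4,5,3)] assms(6,7) by simp
  have "zf_number K (induced E K) = m - 1"
    using zf_number_clique[OF finite_K clique] card_K assms(6) by simp
  then show ?thesis using zf_number_eq card_K assms(6) by simp
qed

end
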